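(* Let $(A;R)\in\mathcal C$, let $t:R\to A$ be a transversal with image $A\setminus Y$, and let $F\subseteq A$ with $F\le A$. Then $$Z=\{f\in F\setminus Y: t^{-1}(f)\not\subseteq F\}\cup(F\cap Y)$$ is a basis for $F$ in the pregeometry $PG(A;R)$.
   Context: A set system is a pair $(A;R)$ where $A$ is a set and $R$ is a set of finite non-empty subsets of $A$. For finite $X\subseteq A$ write $R[X]=\{r\in R: r\subseteq X\}$ and define the predimension $\delta(X)=|X|-|R[X]|$. $\mathcal C$ is the class of finite set systems with $\delta(X)\ge 0$ for all $X\subseteq A$. For $X\subseteq A$, $X\le A$ means $\delta(X)\le\delta(X')$ for all $X'$ with $X\subseteq X'\subseteq A$. Define $d(X)=\min\{\delta(Y): X\subseteq Y\subseteq A\}$ and $\mathrm{cl}(X)=\{y\in A: d(X\cup\{y\})=d(X)\}$; $(A,\mathrm{cl})$ is a pregeometry with rank function $d$, denoted $PG(A;R)$. A transversal of $(A;R)$ is an injective function $t:R\to A$ with $t(r)\in r$ for all $r\in R$. *)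

theory Defs
  imports Main
begin

definition set_system :: "'a set \<Rightarrow> 'a set set \<Rightarrow> bool" where
  "set_system A R \<longleftrightarrow> finite A \<and> (\<forall>r\<in>R. r \<noteq> {} \<and> finite r \<and> r \<subseteq> A)"

definition Rof :: "'a set set \<Rightarrow> 'a set \<Rightarrow> 'a set set" where
  "Rof R X = {r \<in> R. r \<subseteq> X}"

definition delta :: "'a set set \<Rightarrow> 'a set \<Rightarrow> int" where
  "delta R X = int (card X) - int (card (Rof R X))"

definition in_C :: "'a set \<Rightarrow> 'a set set \<Rightarrow> bool" where
  "in_C A R \<longleftrightarrow> set_system A R \<and> (\<forall>X. X \<subseteq> A \<longrightarrow> delta R X \<ge> 0)"

text \<open>X \<le> A (self-sufficiency).\<close>
definition self_suff :: "'a set \<Rightarrow> 'a set set \<Rightarrow> 'a set \<Rightarrow> bool" where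
  "self_suff A R X \<longleftrightarrow> X \<subseteq> A \<and> (\<forall>X'. X \<subseteq> X' \<and> X' \<subseteq> A \<longrightarrow> delta R X \<le> delta R X')"

definition dim :: "'a set \<Rightarrow> 'a set set \<Rightarrow> 'a set \<Rightarrow> int" where
  "dim A R X = Min {delta R Y | Y. X \<subseteq> Y \<and> Y \<subseteq> A}"

definition cl :: "'a set \<Rightarrow> 'a set set \<Rightarrow> 'a set \<Rightarrow> 'a set" where
  "cl A R X = {y \<in> A. dim A R (X \<union> {y}) = dim A R X}"

definition pg_independent :: "'a set \<Rightarrow> 'a set set \<Rightarrow> 'a set \<Rightarrow> bool" where
  "pg_independent A R Z \<longleftrightarrow> Z \<subseteq> A \<and> (\<forall>z\<in>Z. z \<notin> cl A R (Z - {z}))"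

definition pg_basis :: "'a set \<Rightarrow> 'a set set \<Rightarrow> 'a set \<Rightarrow> 'a set \<Rightarrow> bool" where
  "pg_basis A R Z F \<longleftrightarrow> Z \<subseteq> F \<and> pg_independent A R Z \<and> F \<subseteq> cl A R Z"

definition transversal :: "'a set \<Rightarrow> 'a set set \<Rightarrow> ('a set \<Rightarrow> 'a) \<Rightarrow> bool" where
  "transversal A R t \<longleftrightarrow> inj_on t R \<and> (\<forall>r\<in>R. t r \<in> r)"

end

theory Submission
  imports Defs
begin

(* Write Z for the candidate basis.  Since t is injective with image A - Y,
   every element of F outside Z is t(r) for some relation r contained in F, so
   delta(F) <= |Z|.  Conversely, for Z <= X <= F the relations inside X are mapped by t
   injectively into X - Z, so delta(X) >= |Z|.  Submodularity of delta together with
   F <= A propagates this lower bound from subsets of F to all supersets of Z in A,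
   whence d(Z) = |Z|.  A general criterion then finishes the proof: if Z <= F <= A,
   d(Z) = |Z| and delta(F) <= |Z|, then Z is a basis of F in PG(A;R). *)

text \<open>A set system on a finite set has finitely many relations, so all cardinalities below are honest.\<close>

lemma set_system_finite_R: "set_system A R \<Longrightarrow> finite R"
  unfolding set_system_def by (meson Pow_iff finite_Pow_iff finite_subset subsetI)

lemma finite_dim_values:
  assumes "finite A" shows "finite {delta R Y | Y. X \<subseteq> Y \<and> Y \<subseteq> A}"
proof -
  have "{delta R Y | Y. X \<subseteq> Y \<and> Y \<subseteq> A} \<subseteq> delta R ` Pow A" by auto
  then show ?thesis using \<open>finite A\<close> finite_subset by blast
qed

lemma dim_le_delta: "finite A \<Longrightarrow> X \<subseteq> Y \<Longrightarrow> Y \<subseteq> A \<Longrightarrow> dim A R X \<le> delta R Y"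
  unfolding dim_def by (rule Min_le) (auto simp: finite_dim_values)

lemma dim_greatest:
  "finite A \<Longrightarrow> X \<subseteq> A \<Longrightarrow> (\<And>Y. X \<subseteq> Y \<Longrightarrow> Y \<subseteq> A \<Longrightarrow> c \<le> delta R Y) \<Longrightarrow> c \<le> dim A R X"
  unfolding dim_def by (rule Min.boundedI) (auto simp: finite_dim_values)

lemma dim_le_card: "finite A \<Longrightarrow> X \<subseteq> A \<Longrightarrow> dim A R X \<le> int (card X)"
  using dim_le_delta[of A X X R] unfolding delta_def by simp

lemma dim_mono: "finite A \<Longrightarrow> X \<subseteq> X' \<Longrightarrow> X' \<subseteq> A \<Longrightarrow> dim A R X \<le> dim A R X'"
  by (rule dim_greatest) (auto intro: dim_le_delta)

text \<open>Submodularity of the predimension: relations inside X or inside F lie inside X \<union> F.\<close>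

lemma delta_submodular:
  assumes fA: "finite A" and fR: "finite R" and "X \<subseteq> A" "F \<subseteq> A"
  shows "delta R (X \<union> F) + delta R (X \<inter> F) \<le> delta R X + delta R F"
proof -
  have fX: "finite X" "finite F" using assms finite_subset by auto
  have fr: "finite (Rof R X)" "finite (Rof R F)" using fR unfolding Rof_def by auto
  have "card (Rof R X \<union> Rof R F) \<le> card (Rof R (X \<union> F))"
    by (rule card_mono) (use fR in \<open>auto simp: Rof_def\<close>)
  moreover have "Rof R X \<inter> Rof R F = Rof R (X \<inter> F)" unfolding Rof_def by auto
  ultimately have "card (Rof R X) + card (Rof R F) \<le> card (Rof R (X \<union> F)) + card (Rof R (X \<inter> F))"
    using card_Un_Int[OF fr] by simp
  moreover have "card (X \<union> F) + card (X \<inter> F) = card X + card F"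
    using card_Un_Int[OF fX] by simp
  ultimately show ?thesis unfolding delta_def by linarith
qed

lemma self_suff_dim_lower_bound:
  assumes "set_system A R" and F: "self_suff A R F" and "Z \<subseteq> F"
    and inside: "\<And>X. Z \<subseteq> X \<Longrightarrow> X \<subseteq> F \<Longrightarrow> c \<le> delta R X"
  shows "c \<le> dim A R Z"
proof -
  have fA: "finite A" and fR: "finite R"
    using assms(1) set_system_finite_R unfolding set_system_def by auto
  have FA: "F \<subseteq> A" and Fmin: "\<And>X'. F \<subseteq> X' \<Longrightarrow> X' \<subseteq> A \<Longrightarrow> delta R F \<le> delta R X'"
    using F unfolding self_suff_def by auto
  show ?thesis
  proof (rule dim_greatest[OF fA])
    show "Z \<subseteq> A" using \<open>Z \<subseteq> F\<close> FA by auto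
    fix X assume X: "Z \<subseteq> X" "X \<subseteq> A"
    have "delta R (X \<union> F) + delta R (X \<inter> F) \<le> delta R X + delta R F"
      using delta_submodular[OF fA fR X(2) FA] .
    moreover have "delta R F \<le> delta R (X \<union> F)" using Fmin X FA by auto
    moreover have "c \<le> delta R (X \<inter> F)" using inside X \<open>Z \<subseteq> F\<close> by auto
    ultimately show "c \<le> delta R X" by linarith
  qed
qed

text \<open>A set of full rank is independent: removing a point drops the rank below |Z|.\<close>

lemma full_rank_independent:
  assumes fA: "finite A" and ZA: "Z \<subseteq> A" and dZ: "dim A R Z = int (card Z)"
  shows "pg_independent A R Z"
  unfolding pg_independent_def cl_def
proof (intro conjI ballI ZA)
  fix z assume z: "z \<in> Z"
  have fZ: "finite Z" using ZA fA finite_subset by blast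
  have "dim A R (Z - {z}) \<le> int (card (Z - {z}))" by (rule dim_le_card) (use fA ZA in auto)
  also have "\<dots> < int (card Z)"
    using z fZ card_Diff1_less[OF fZ z] by linarith
  finally have "dim A R (Z - {z}) < dim A R (Z - {z} \<union> {z})"
    using dZ insert_absorb[OF z] by simp
  then show "z \<notin> {y \<in> A. dim A R (Z - {z} \<union> {y}) = dim A R (Z - {z})}" by auto
qed

text \<open>Basis criterion: a full-rank subset Z of F with delta(F) \<le> |Z| is a basis of F,
  since adding any point of F cannot raise the rank above delta(F).\<close>

lemma basis_criterion:
  assumes fA: "finite A" and "Z \<subseteq> F" "F \<subseteq> A"
    and dZ: "dim A R Z = int (card Z)" and deltaF: "delta R F \<le> int (card Z)"
  shows "pg_basis A R Z F"
  unfolding pg_basis_def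
proof (intro conjI)
  show "Z \<subseteq> F" by fact
  show "pg_independent A R Z"
    using full_rank_independent[OF fA _ dZ] assms(2,3) by blast
  show "F \<subseteq> cl A R Z"
    unfolding cl_def
  proof
    fix y assume y: "y \<in> F"
    have "dim A R (Z \<union> {y}) \<le> delta R F"
      by (rule dim_le_delta[OF fA _ \<open>F \<subseteq> A\<close>]) (use \<open>Z \<subseteq> F\<close> y in auto)
    moreover have "dim A R Z \<le> dim A R (Z \<union> {y})"
      by (rule dim_mono[OF fA]) (use \<open>Z \<subseteq> F\<close> \<open>F \<subseteq> A\<close> y in auto)
    ultimately have "dim A R (Z \<union> {y}) = dim A R Z" using dZ deltaF by linarith
    then show "y \<in> {y \<in> A. dim A R (Z \<union> {y}) = dim A R Z}" using y \<open>F \<subseteq> A\<close> by blast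
  qed
qed

definition transversal_basis ::
  "'a set set \<Rightarrow> ('a set \<Rightarrow> 'a) \<Rightarrow> 'a set \<Rightarrow> 'a set \<Rightarrow> 'a set" where
  "transversal_basis R t Y F = {f \<in> F - Y. \<exists>r\<in>R. t r = f \<and> \<not> r \<subseteq> F} \<union> (F \<inter> Y)"

text \<open>Every point of F outside the candidate basis is t(r) for a relation r inside F;
  hence delta(F) \<le> |Z|.\<close>

lemma delta_le_card_transversal_basis:
  assumes "set_system A R" and "t ` R = A - Y" and "F \<subseteq> A"
  shows "delta R F \<le> int (card (transversal_basis R t Y F))"
proof -
  let ?Z = "transversal_basis R t Y F"
  have fR: "finite R" using set_system_finite_R[OF assms(1)] .
  have fF: "finite F" using assms(1,3) finite_subset unfolding set_system_def by blast
  have ZF: "?Z \<subseteq> F" unfolding transversal_basis_def by auto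
  have "F - ?Z \<subseteq> t ` Rof R F"
  proof
    fix w assume w: "w \<in> F - ?Z"
    then have "w \<in> t ` R" using assms(2,3) unfolding transversal_basis_def by blast
    then obtain r where r: "r \<in> R" "t r = w" by blast
    then have "r \<subseteq> F" using w unfolding transversal_basis_def by auto
    then show "w \<in> t ` Rof R F" using r unfolding Rof_def by auto
  qed
  then have "card (F - ?Z) \<le> card (t ` Rof R F)"
    by (rule card_mono[rotated]) (use fR in \<open>auto simp: Rof_def\<close>)
  also have "\<dots> \<le> card (Rof R F)" by (rule card_image_le) (use fR in \<open>auto simp: Rof_def\<close>)
  finally show ?thesis
    unfolding delta_def using card_Diff_subset[OF finite_subset[OF ZF fF] ZF]
      card_mono[OF fF ZF] by linarith
qed

text \<open>Between Z and F, the relations inside X are sent by t injectively into X - Z: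
  t(r) lies in X, not in Y, and not in Z because r \<subseteq> F.  Hence delta(X) \<ge> |Z|.\<close>

lemma card_transversal_basis_le_delta:
  assumes "set_system A R" and tr: "transversal A R t" and "t ` R = A - Y" and "F \<subseteq> A"
    and X: "transversal_basis R t Y F \<subseteq> X" "X \<subseteq> F"
  shows "int (card (transversal_basis R t Y F)) \<le> delta R X"
proof -
  let ?Z = "transversal_basis R t Y F"
  have inj: "inj_on t R" and tin: "\<And>r. r \<in> R \<Longrightarrow> t r \<in> r"
    using tr unfolding transversal_def by auto
  have "X \<subseteq> A" using X(2) assms(4) by (rule order_trans)
  then have fX: "finite X" using assms(1) finite_subset unfolding set_system_def by blast
  have sub: "t ` Rof R X \<subseteq> X - ?Z"
  proof
    fix x assume "x \<in> t ` Rof R X"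
    then obtain r where r: "r \<in> R" "r \<subseteq> X" "x = t r" unfolding Rof_def by auto
    have "x \<notin> Y" using r assms(3) by auto
    moreover have "x \<notin> ?Z"
    proof
      assume "x \<in> ?Z"
      then obtain r' where "r' \<in> R" "t r' = x" "\<not> r' \<subseteq> F"
        unfolding transversal_basis_def using \<open>x \<notin> Y\<close> by auto
      then have "r' = r" using inj r inj_on_def by metis
      then show False using \<open>\<not> r' \<subseteq> F\<close> r X(2) by auto
    qed
    ultimately show "x \<in> X - ?Z" using tin r by auto
  qed
  have "card (Rof R X) = card (t ` Rof R X)"
    by (rule card_image[symmetric]) (rule inj_on_subset[OF inj], auto simp: Rof_def)
  also have "\<dots> \<le> card (X - ?Z)" by (rule card_mono) (use fX sub in auto)
  also have "\<dots> = card X - card ?Z" using card_Diff_subset[OF finite_subset[OF X(1) fX] X(1)] .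
  finally show ?thesis unfolding delta_def using card_mono[OF fX X(1)] by linarith
qed

theorem corollary2p3:
  fixes A :: "'a set" and R :: "'a set set" and t :: "'a set \<Rightarrow> 'a" and Y F :: "'a set"
  assumes "in_C A R"
    and "transversal A R t"
    and "t ` R = A - Y"
    and "self_suff A R F"
  shows "pg_basis A R
           ({f \<in> F - Y. \<exists>r\<in>R. t r = f \<and> \<not> r \<subseteq> F} \<union> (F \<inter> Y)) F"
proof -
  let ?Z = "transversal_basis R t Y F"
  have ss: "set_system A R" using assms(1) unfolding in_C_def by auto
  have fA: "finite A" using ss unfolding set_system_def by auto
  have FA: "F \<subseteq> A" using assms(4) unfolding self_suff_def by auto
  have ZF: "?Z \<subseteq> F" unfolding transversal_basis_def by auto
  have "int (card ?Z) \<le> dim A R ?Z"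
    using self_suff_dim_lower_bound[OF ss assms(4) ZF]
      card_transversal_basis_le_delta[OF ss assms(2,3) FA] by blast
  moreover have "dim A R ?Z \<le> int (card ?Z)" using dim_le_card[OF fA] ZF FA by blast
  ultimately have "dim A R ?Z = int (card ?Z)" by linarith
  then have "pg_basis A R ?Z F"
    using basis_criterion[OF fA ZF FA] delta_le_card_transversal_basis[OF ss assms(3) FA] by blast
  then show ?thesis unfolding transversal_basis_def .
qed

end
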